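(* Let $\mathcal{H}$ be a finite-dimensional Hilbert space with orthonormal basis $\{|g_i\rangle\}_{i=1}^{N_g}\cup\{|e_j\rangle\}_{j=1}^{N_e}$ (ground and excited states). Let $$H=\sum_{i=1}^{N_g}\sum_{j=1}^{N_e}\Big[\Delta_{ij}\big(|g_i\rangle\langle g_i|-|e_j\rangle\langle e_j|\big)+\big(V_{ij}|g_i\rangle\langle e_j|+V_{ij}^*|e_j\rangle\langle g_i|\big)\Big]$$ with $\Delta_{ij}\in\mathbb{R}$, $V_{ij}\in\mathbb{C}$. Let $\gamma_{ij}\ge 0$ be decay rates with $\Gamma_j:=\sum_{i=1}^{N_g}\gamma_{ij}>0$ for every $j$, let $\sigma_{ij}=|g_i\rangle\langle e_j|$, and define the Lindblad operator $$L(\rho)=-i[H,\rho]+\sum_{i,j}\gamma_{ij}\Big(-\tfrac12\{\sigma_{ij}^\dagger\sigma_{ij},\rho\}+\sigma_{ij}\rho\sigma_{ij}^\dagger\Big).$$ Let $\Gamma=\sum_{i,j}\gamma_{ij}\sigma_{ij}^\dagger\sigma_{ij}$, $\tilde H=H-i\Gamma$, and $L_{\tilde H}\rho=-i(\tilde H\rho-\rho\tilde H^\dagger)$. Then a density matrix $\rho_d$ on $\mathcal{H}$ is a dark state of $L$ if and only if $L_{\tilde H}\rho_d=0$.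
   Context: A density matrix is a positive semidefinite Hermitian operator of trace one. A dark state of $L$ is a density matrix $\rho$ with $L\rho=0$ that involves only the ground-state manifold, i.e. $P\rho P=\rho$ where $P=\sum_{i=1}^{N_g}|g_i\rangle\langle g_i|$ (equivalently, $\rho$ has no population or coherence involving the excited states $|e_j\rangle$). $\{A,B\}=AB+BA$ denotes the anticommutator. *)

theory Defs
  imports "HOL-Analysis.Analysis"
begin

text \<open>Operators on the Hilbert space spanned by the orthonormal basis
  ground states (Inl i, i :: 'g) and excited states (Inr j, j :: 'e).
  Operators are complex square matrices indexed by the sum type.\<close>

type_synonym ('g,'e) op = "complex ^ ('g + 'e) ^ ('g + 'e)"

definition ketbra :: "'n \<Rightarrow> 'n \<Rightarrow> complex ^ 'n ^ 'n" where
  "ketbra a b = (\<chi> r c. if r = a \<and> c = b then 1 else 0)"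

definition smat :: "complex \<Rightarrow> complex ^ 'n ^ 'n \<Rightarrow> complex ^ 'n ^ 'n" where
  "smat z A = (\<chi> r c. z * A $ r $ c)"

definition adj :: "complex ^ 'n ^ 'n \<Rightarrow> complex ^ 'n ^ 'n" where
  "adj A = (\<chi> r c. cnj (A $ c $ r))"

definition trace :: "complex ^ 'n ^ 'n \<Rightarrow> complex" where
  "trace A = (\<Sum>i\<in>UNIV. A $ i $ i)"

definition comm :: "complex ^ 'n ^ 'n \<Rightarrow> complex ^ 'n ^ 'n \<Rightarrow> complex ^ 'n ^ 'n" where
  "comm A B = A ** B - B ** A"

definition anticomm :: "complex ^ 'n ^ 'n \<Rightarrow> complex ^ 'n ^ 'n \<Rightarrow> complex ^ 'n ^ 'n" where
  "anticomm A B = A ** B + B ** A"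

definition hermitian :: "complex ^ 'n ^ 'n \<Rightarrow> bool" where
  "hermitian A \<longleftrightarrow> adj A = A"

definition psd :: "complex ^ 'n ^ 'n \<Rightarrow> bool" where
  "psd A \<longleftrightarrow> hermitian A \<and>
     (\<forall>v :: complex ^ 'n. let q = (\<Sum>i\<in>UNIV. cnj (v $ i) * (A *v v) $ i) in
        q \<in> \<real> \<and> 0 \<le> Re q)"

definition density :: "complex ^ 'n ^ 'n \<Rightarrow> bool" where
  "density \<rho> \<longleftrightarrow> psd \<rho> \<and> trace \<rho> = 1"

definition hamiltonian :: "('g::finite \<Rightarrow> 'e::finite \<Rightarrow> real) \<Rightarrow> ('g \<Rightarrow> 'e \<Rightarrow> complex)
    \<Rightarrow> ('g,'e) op" where
  "hamiltonian \<Delta> V = (\<Sum>i\<in>UNIV. \<Sum>j\<in>UNIV.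
      smat (complex_of_real (\<Delta> i j)) (ketbra (Inl i) (Inl i) - ketbra (Inr j) (Inr j))
      + (smat (V i j) (ketbra (Inl i) (Inr j)) + smat (cnj (V i j)) (ketbra (Inr j) (Inl i))))"

definition sigma :: "'g::finite \<Rightarrow> 'e::finite \<Rightarrow> ('g,'e) op" where
  "sigma i j = ketbra (Inl i) (Inr j)"

definition lindblad :: "('g::finite \<Rightarrow> 'e::finite \<Rightarrow> real) \<Rightarrow> ('g \<Rightarrow> 'e \<Rightarrow> complex)
    \<Rightarrow> ('g \<Rightarrow> 'e \<Rightarrow> real) \<Rightarrow> ('g,'e) op \<Rightarrow> ('g,'e) op" where
  "lindblad \<Delta> V \<gamma> \<rho> = smat (- \<i>) (comm (hamiltonian \<Delta> V) \<rho>)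
     + (\<Sum>i\<in>UNIV. \<Sum>j\<in>UNIV. smat (complex_of_real (\<gamma> i j))
          (smat (- 1/2) (anticomm (adj (sigma i j) ** sigma i j) \<rho>)
           + sigma i j ** \<rho> ** adj (sigma i j)))"

definition decay_op :: "('g::finite \<Rightarrow> 'e::finite \<Rightarrow> real) \<Rightarrow> ('g,'e) op" where
  "decay_op \<gamma> = (\<Sum>i\<in>UNIV. \<Sum>j\<in>UNIV.
      smat (complex_of_real (\<gamma> i j)) (adj (sigma i j) ** sigma i j))"

definition Htilde :: "('g::finite \<Rightarrow> 'e::finite \<Rightarrow> real) \<Rightarrow> ('g \<Rightarrow> 'e \<Rightarrow> complex)
    \<Rightarrow> ('g \<Rightarrow> 'e \<Rightarrow> real) \<Rightarrow> ('g,'e) op" where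
  "Htilde \<Delta> V \<gamma> = hamiltonian \<Delta> V - smat \<i> (decay_op \<gamma>)"

definition L_Htilde :: "('g::finite \<Rightarrow> 'e::finite \<Rightarrow> real) \<Rightarrow> ('g \<Rightarrow> 'e \<Rightarrow> complex)
    \<Rightarrow> ('g \<Rightarrow> 'e \<Rightarrow> real) \<Rightarrow> ('g,'e) op \<Rightarrow> ('g,'e) op" where
  "L_Htilde \<Delta> V \<gamma> \<rho> = smat (- \<i>)
      (Htilde \<Delta> V \<gamma> ** \<rho> - \<rho> ** adj (Htilde \<Delta> V \<gamma>))"

definition ground_proj :: "('g::finite,'e::finite) op" where
  "ground_proj = (\<Sum>i\<in>UNIV. ketbra (Inl i) (Inl i))"

definition dark_state :: "('g::finite \<Rightarrow> 'e::finite \<Rightarrow> real) \<Rightarrow> ('g \<Rightarrow> 'e \<Rightarrow> complex)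
    \<Rightarrow> ('g \<Rightarrow> 'e \<Rightarrow> real) \<Rightarrow> ('g,'e) op \<Rightarrow> bool" where
  "dark_state \<Delta> V \<gamma> \<rho> \<longleftrightarrow> density \<rho> \<and> lindblad \<Delta> V \<gamma> \<rho> = 0
     \<and> ground_proj ** \<rho> ** ground_proj = \<rho>"

end

theory Submission
  imports Defs
begin

text \<open>If \<rho> lives on the ground manifold, the decay operator \<Gamma> and all jump terms annihilate it,
  because \<Gamma> and the raising operators adj \<sigma>_ij only act on excited states; so both L \<rho> and
  L_H~ \<rho> reduce to -i[H,\<rho>]. Conversely, if L_H~ \<rho> = 0 then its trace vanishes; the commutator
  is traceless, which leaves tr (\<Gamma> \<rho>) = \<Sigma>_j \<Gamma>_j \<rho>(e_j,e_j) = 0. As every \<Gamma>_j > 0 and \<rho> \<ge> 0, all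
  excited populations vanish, and positivity then kills the whole excited rows and columns of \<rho>.\<close>

lemma ketbra_component [simp]: "ketbra a b $ r $ c = (if r = a \<and> c = b then 1 else 0)"
  by (simp add: ketbra_def)

lemma smat_component [simp]: "smat z A $ r $ c = z * A $ r $ c"
  by (simp add: smat_def)

lemma smat_zero [simp]: "smat z 0 = 0"
  by (simp add: vec_eq_iff)

lemma adj_component [simp]: "adj A $ r $ c = cnj (A $ c $ r)"
  by (simp add: adj_def)

lemma matrix_mult_component: "(A ** B) $ r $ c = (\<Sum>k\<in>UNIV. A $ r $ k * B $ k $ c)"
  by (simp add: matrix_matrix_mult_def)

lemma ketbra_mult_component: "(ketbra a b ** A) $ r $ c = (if r = a then A $ b $ c else 0)"
  by (cases "r = a") (simp_all add: matrix_mult_component if_distrib[of "\<lambda>x. x * _"] cong: if_cong)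

lemma mult_ketbra_component: "(A ** ketbra a b) $ r $ c = (if c = b then A $ r $ a else 0)"
  by (cases "c = b") (simp_all add: matrix_mult_component if_distrib[of "\<lambda>x. _ * x"] cong: if_cong)

lemma adj_ketbra: "adj (ketbra a b) = ketbra b a"
  by (auto simp: vec_eq_iff)

lemma adj_add: "adj (A + B) = adj A + adj B"
  by (simp add: vec_eq_iff)

lemma adj_diff: "adj (A - B) = adj A - adj B"
  by (simp add: vec_eq_iff)

lemma adj_smat: "adj (smat z A) = smat (cnj z) (adj A)"
  by (simp add: vec_eq_iff)

lemma adj_sum: "adj (\<Sum>x\<in>S. f x) = (\<Sum>x\<in>S. adj (f x))"
  by (simp add: vec_eq_iff)

lemma hermitian_component: "hermitian A \<Longrightarrow> A $ r $ c = cnj (A $ c $ r)"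
  by (metis adj_component hermitian_def)

lemma trace_eq_matrix_trace: "Defs.trace = Determinants.trace"
  by (simp add: fun_eq_iff Defs.trace_def Determinants.trace_def)

lemma trace_smat: "Determinants.trace (smat z A) = z * Determinants.trace A"
  by (simp add: Determinants.trace_def sum_distrib_left)

lemma trace_comm: "Determinants.trace (comm A B) = 0"
  unfolding comm_def trace_sub trace_mul_sym[of A B] by simp

text \<open>The indices k and l may coincide, which gives the diagonal entries.\<close>

lemma quadratic_form_two_basis:
  fixes A :: "complex ^ 'n ^ 'n"
  assumes v: "v = (\<chi> i. if i = k then x else 0) + (\<chi> i. if i = l then y else 0)"
  shows "(\<Sum>i\<in>UNIV. cnj (v $ i) * (A *v v) $ i)
       = cnj x * x * A $ k $ k + cnj x * y * A $ k $ l + cnj y * x * A $ l $ k + cnj y * y * A $ l $ l"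
proof -
  have cnj_vi: "cnj (v $ i) = (if i = k then cnj x else 0) + (if i = l then cnj y else 0)" for i
    by (simp add: v)
  have Av: "(A *v v) $ i = A $ i $ k * x + A $ i $ l * y" for i
    by (simp add: v matrix_vector_mult_def distrib_left sum.distrib if_distrib[of "\<lambda>x. _ * x"] cong: if_cong)
  show ?thesis
    by (simp add: Av cnj_vi distrib_left distrib_right sum.distrib if_distrib[of "\<lambda>x. x * _"] cong: if_cong)
qed

lemma psd_hermitian: "psd A \<Longrightarrow> hermitian A"
  by (simp add: psd_def)

lemma psd_quadratic_form:
  assumes "psd A"
  shows "(\<Sum>i\<in>UNIV. cnj (v $ i) * (A *v v) $ i) \<in> \<real>"
    and "0 \<le> Re (\<Sum>i\<in>UNIV. cnj (v $ i) * (A *v v) $ i)"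
  using assms by (simp_all add: psd_def Let_def)

lemma psd_diagonal:
  fixes A :: "complex ^ 'n ^ 'n"
  assumes "psd A"
  shows "A $ k $ k \<in> \<real>" and "0 \<le> Re (A $ k $ k)"
  using psd_quadratic_form[OF assms, of "(\<chi> i. if i = k then 1 else 0) + (\<chi> i. if i = k then 0 else 0)"]
  unfolding quadratic_form_two_basis[OF refl] by simp_all

lemma psd_diagonal_zero_imp_row_zero:
  fixes A :: "complex ^ 'n ^ 'n"
  assumes psd: "psd A" and diag: "A $ k $ k = 0"
  shows "A $ k $ l = 0"
proof (rule ccontr)
  define b where "b = A $ k $ l"
  assume "A $ k $ l \<noteq> 0"
  then have "b \<noteq> 0" by (simp add: b_def)
  txt \<open>For v = x e_k + e_l the quadratic form is 2 Re (cnj x b) + A(l,l);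
    x is scaled along -b to make it -A(l,l) - 2 < 0.\<close>
  define x where "x = - complex_of_real ((Re (A $ l $ l) + 1) / (cmod b)\<^sup>2) * b"
  have "cnj x * b = - complex_of_real ((Re (A $ l $ l) + 1) / (cmod b)\<^sup>2) * (b * cnj b)"
    by (simp add: x_def)
  also have "\<dots> = - complex_of_real (Re (A $ l $ l) + 1)"
    using \<open>b \<noteq> 0\<close> by (simp add: complex_norm_square[symmetric] flip: of_real_mult)
  finally have xb: "cnj x * b = - complex_of_real (Re (A $ l $ l) + 1)" .
  have "A $ l $ k = cnj b"
    using hermitian_component[OF psd_hermitian[OF psd], of l k] by (simp add: b_def)
  define v :: "complex ^ 'n" where
    "v = (\<chi> i. if i = k then x else 0) + (\<chi> i. if i = l then 1 else 0)"
  have "(\<Sum>i\<in>UNIV. cnj (v $ i) * (A *v v) $ i) = cnj x * b + cnj (cnj x * b) + A $ l $ l"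
    using \<open>A $ l $ k = cnj b\<close>
    by (simp add: quadratic_form_two_basis[OF v_def] diag b_def[symmetric] mult.commute)
  then have "Re (\<Sum>i\<in>UNIV. cnj (v $ i) * (A *v v) $ i) = - Re (A $ l $ l) - 2"
    by (simp add: xb)
  then show False
    using psd_quadratic_form(2)[OF psd, of v] psd_diagonal(2)[OF psd, of l] by linarith
qed

lemma psd_weighted_diagonal_sum_zero:
  fixes A :: "complex ^ 'n ^ 'n"
  assumes psd: "psd A" and w_nonneg: "\<And>r. 0 \<le> w r"
    and sum_zero: "(\<Sum>r\<in>UNIV. complex_of_real (w r) * A $ r $ r) = 0" and "0 < w k"
  shows "A $ k $ k = 0"
proof -
  have diag_real: "A $ r $ r = complex_of_real (Re (A $ r $ r))" for r
    using psd_diagonal(1)[OF psd] by (simp add: complex_is_Real_iff)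
  have "complex_of_real (\<Sum>r\<in>UNIV. w r * Re (A $ r $ r)) = 0"
    unfolding sum_zero[symmetric] by (simp add: diag_real[symmetric])
  then have "(\<Sum>r\<in>UNIV. w r * Re (A $ r $ r)) = 0"
    by (simp only: of_real_eq_0_iff)
  then have "w k * Re (A $ k $ k) = 0"
    using w_nonneg psd_diagonal(2)[OF psd] by (simp add: sum_nonneg_eq_0_iff)
  then show ?thesis
    using \<open>0 < w k\<close> diag_real by (metis mult_eq_0_iff of_real_0 order_less_irrefl)
qed

lemma nonhermitian_generator_eq:
  assumes "hermitian H" and "hermitian G"
  shows "smat (- \<i>) ((H - smat \<i> G) ** \<rho> - \<rho> ** adj (H - smat \<i> G))
       = smat (- \<i>) (comm H \<rho>) - anticomm G \<rho>"
proof -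
  have "adj (H - smat \<i> G) = H + smat \<i> G"
    using assms by (simp add: adj_diff adj_smat hermitian_def vec_eq_iff)
  then show ?thesis
    by (simp add: vec_eq_iff comm_def anticomm_def matrix_mult_component algebra_simps sum.distrib
        sum_subtractf sum_distrib_left)
qed

lemma hamiltonian_hermitian: "hermitian (hamiltonian \<Delta> V)"
  unfolding hermitian_def hamiltonian_def
  by (simp add: adj_sum adj_add adj_diff adj_smat adj_ketbra add.commute)

lemma sigma_adj_mult_sigma: "adj (sigma i j) ** sigma i j = ketbra (Inr j) (Inr j)"
  by (simp add: sigma_def adj_ketbra vec_eq_iff ketbra_mult_component)

definition decay_rate :: "('g::finite \<Rightarrow> 'e::finite \<Rightarrow> real) \<Rightarrow> 'g + 'e \<Rightarrow> real" where
  "decay_rate \<gamma> r = (case r of Inl _ \<Rightarrow> 0 | Inr j \<Rightarrow> (\<Sum>i\<in>UNIV. \<gamma> i j))"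

lemma decay_rate_nonneg: "(\<And>i j. 0 \<le> \<gamma> i j) \<Longrightarrow> 0 \<le> decay_rate \<gamma> r"
  by (simp add: decay_rate_def sum_nonneg split: sum.split)

lemma decay_op_component:
  "decay_op \<gamma> $ r $ c = (if r = c then complex_of_real (decay_rate \<gamma> r) else 0)"
  unfolding decay_op_def sigma_adj_mult_sigma
  by (cases r; cases c)
    (auto simp: decay_rate_def if_distrib[of "\<lambda>x. _ * x"] cong: if_cong intro!: sum.neutral)

lemma decay_op_hermitian: "hermitian (decay_op \<gamma>)"
  by (simp add: hermitian_def vec_eq_iff decay_op_component)

lemma decay_op_mult_component: "(decay_op \<gamma> ** A) $ r $ c = decay_rate \<gamma> r * A $ r $ c"
  by (simp add: matrix_mult_component decay_op_component if_distrib[of "\<lambda>x. x * _"] cong: if_cong)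

lemma mult_decay_op_component: "(A ** decay_op \<gamma>) $ r $ c = A $ r $ c * decay_rate \<gamma> c"
  by (simp add: matrix_mult_component decay_op_component if_distrib[of "\<lambda>x. _ * x"] cong: if_cong)

lemma trace_decay_op_mult:
  "Determinants.trace (decay_op \<gamma> ** A) = (\<Sum>r\<in>UNIV. decay_rate \<gamma> r * A $ r $ r)"
  by (simp add: Determinants.trace_def decay_op_mult_component)

lemma L_Htilde_eq:
  "L_Htilde \<Delta> V \<gamma> \<rho> = smat (- \<i>) (comm (hamiltonian \<Delta> V) \<rho>) - anticomm (decay_op \<gamma>) \<rho>"
  unfolding L_Htilde_def Htilde_def
  by (rule nonhermitian_generator_eq[OF hamiltonian_hermitian decay_op_hermitian])

lemma trace_L_Htilde:
  "trace (L_Htilde \<Delta> V \<gamma> \<rho>) = - 2 * (\<Sum>r\<in>UNIV. decay_rate \<gamma> r * \<rho> $ r $ r)"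
  by (simp add: trace_eq_matrix_trace L_Htilde_eq anticomm_def trace_sub trace_add trace_smat trace_comm
      trace_mul_sym[of \<rho>] trace_decay_op_mult)

definition ground_supported :: "('g::finite, 'e::finite) op \<Rightarrow> bool" where
  "ground_supported \<rho> \<longleftrightarrow> (\<forall>r c. \<not> (isl r \<and> isl c) \<longrightarrow> \<rho> $ r $ c = 0)"

lemma ground_proj_component: "ground_proj $ r $ c = (if r = c then (if isl r then 1 else 0) else 0)"
  by (cases r; cases c) (auto simp: ground_proj_def intro!: sum.neutral)

lemma ground_proj_mult_component: "(ground_proj ** A) $ r $ c = (if isl r then A $ r $ c else 0)"
  by (simp add: matrix_mult_component ground_proj_component if_distrib[of "\<lambda>x. x * _"] cong: if_cong)

lemma mult_ground_proj_component: "(A ** ground_proj) $ r $ c = (if isl c then A $ r $ c else 0)"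
  by (simp add: matrix_mult_component ground_proj_component if_distrib[of "\<lambda>x. _ * x"] cong: if_cong)

lemma ground_proj_sandwich_eq_iff:
  "ground_proj ** \<rho> ** ground_proj = \<rho> \<longleftrightarrow> ground_supported \<rho>"
  by (auto simp: vec_eq_iff ground_supported_def ground_proj_mult_component mult_ground_proj_component)

lemma ground_supported_decay_op_mult: "ground_supported \<rho> \<Longrightarrow> decay_op \<gamma> ** \<rho> = 0"
  by (auto simp: vec_eq_iff decay_op_mult_component ground_supported_def decay_rate_def split: sum.split)

lemma ground_supported_mult_decay_op: "ground_supported \<rho> \<Longrightarrow> \<rho> ** decay_op \<gamma> = 0"
  by (auto simp: vec_eq_iff mult_decay_op_component ground_supported_def decay_rate_def split: sum.split)

lemma lindblad_ground_supported:
  assumes "ground_supported \<rho>"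
  shows "lindblad \<Delta> V \<gamma> \<rho> = smat (- \<i>) (comm (hamiltonian \<Delta> V) \<rho>)"
proof -
  have "ketbra (Inr j) (Inr j) ** \<rho> = 0" "\<rho> ** ketbra (Inr j) (Inr j) = 0"
    "sigma i j ** \<rho> ** adj (sigma i j) = 0" for i j
    using assms by (auto simp: vec_eq_iff sigma_def adj_ketbra ground_supported_def
        ketbra_mult_component mult_ketbra_component)
  then show ?thesis
    by (simp add: lindblad_def sigma_adj_mult_sigma anticomm_def)
qed

lemma L_Htilde_ground_supported:
  "ground_supported \<rho> \<Longrightarrow> L_Htilde \<Delta> V \<gamma> \<rho> = smat (- \<i>) (comm (hamiltonian \<Delta> V) \<rho>)"
  by (simp add: L_Htilde_eq anticomm_def ground_supported_decay_op_mult ground_supported_mult_decay_op)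

lemma L_Htilde_zero_imp_ground_supported:
  fixes \<rho> :: "('g::finite, 'e::finite) op"
  assumes rates_nonneg: "\<And>i j. 0 \<le> \<gamma> i j" and rates_pos: "\<And>j. 0 < (\<Sum>i\<in>UNIV. \<gamma> i j)"
    and psd: "psd \<rho>" and "L_Htilde \<Delta> V \<gamma> \<rho> = 0"
  shows "ground_supported \<rho>"
proof -
  have "(\<Sum>r\<in>UNIV. complex_of_real (decay_rate \<gamma> r) * \<rho> $ r $ r) = 0"
    using trace_L_Htilde[of \<Delta> V \<gamma> \<rho>] \<open>L_Htilde \<Delta> V \<gamma> \<rho> = 0\<close> by (simp add: Defs.trace_def)
  moreover have "0 < decay_rate \<gamma> (Inr j)" for j
    using rates_pos by (simp add: decay_rate_def)
  ultimately have "\<rho> $ Inr j $ Inr j = 0" for j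
    by (rule psd_weighted_diagonal_sum_zero[OF psd decay_rate_nonneg[OF rates_nonneg]])
  then have row: "\<rho> $ Inr j $ c = 0" for j c
    by (rule psd_diagonal_zero_imp_row_zero[OF psd])
  then have col: "\<rho> $ c $ Inr j = 0" for j c
    using hermitian_component[OF psd_hermitian[OF psd], of c "Inr j"] by simp
  show ?thesis
    unfolding ground_supported_def
  proof (intro allI impI)
    fix r c :: "'g + 'e"
    assume "\<not> (isl r \<and> isl c)"
    then show "\<rho> $ r $ c = 0"
      using row col by (cases r; cases c) auto
  qed
qed

theorem theorem1:
  fixes \<Delta> :: "'g::finite \<Rightarrow> 'e::finite \<Rightarrow> real"
    and V :: "'g \<Rightarrow> 'e \<Rightarrow> complex"
    and \<gamma> :: "'g \<Rightarrow> 'e \<Rightarrow> real"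
    and \<rho> :: "('g,'e) op"
  assumes "\<And>i j. \<gamma> i j \<ge> 0"
    and "\<And>j. (\<Sum>i\<in>UNIV. \<gamma> i j) > 0"
    and "density \<rho>"
  shows "dark_state \<Delta> V \<gamma> \<rho> \<longleftrightarrow> L_Htilde \<Delta> V \<gamma> \<rho> = 0"
proof
  assume "dark_state \<Delta> V \<gamma> \<rho>"
  then have "ground_supported \<rho>" and "lindblad \<Delta> V \<gamma> \<rho> = 0"
    by (simp_all add: dark_state_def ground_proj_sandwich_eq_iff)
  then show "L_Htilde \<Delta> V \<gamma> \<rho> = 0"
    by (simp add: L_Htilde_ground_supported lindblad_ground_supported)
next
  assume L: "L_Htilde \<Delta> V \<gamma> \<rho> = 0"
  have "ground_supported \<rho>"
    using L_Htilde_zero_imp_ground_supported[OF assms(1,2) _ L] assms(3) by (simp add: density_def)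
  then show "dark_state \<Delta> V \<gamma> \<rho>"
    using L assms(3)
    by (simp add: dark_state_def ground_proj_sandwich_eq_iff L_Htilde_ground_supported
        lindblad_ground_supported)
qed

end
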